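(* Let $G=(V,E)$ be a graph on $V=\{1,\dots,n\}$ and $(\tilde g,\theta)$ any nominal configuration. Then $\Pi(\tilde g,\theta)\subseteq\mathrm{null}(M(G,\tilde g,\theta))$.
   Context: $E\subseteq\{(i,k):i\ne k\}$, where $(i,k)\in E$ means agent $k$ measures agent $i$. $R(\theta)$ is the $2\times2$ rotation by $\theta$, $\Theta=\mathrm{diag}(R(\theta),1)\in\mathbb R^{3\times3}$. $\tilde g=[\tilde g_1^\top,\dots,\tilde g_n^\top]^\top$, $\tilde g_i=[\tilde p_i^\top,\tilde\phi_i]^\top\in\mathbb R^3$, $\Theta^\top\tilde g_i=[\tilde p^x_{i,\theta},\tilde p^y_{i,\theta},\tilde\phi_i]^\top$; $\tilde p^x_{uv,\theta}=\tilde p^x_{u,\theta}-\tilde p^x_{v,\theta}$, similarly $y$, $\tilde\phi_{uv}=\tilde\phi_u-\tilde\phi_v$; $w_{uv}=\mathrm{diag}(\tilde p^x_{uv,\theta},\tilde p^y_{uv,\theta},\tilde\phi_{uv})$, $W_{uv}=w_{uv}\Theta^\top$. $C=\{(i,j,k)\in V^3:(i,k),(j,k)\in E,\ i<j\}$. The matrix-valued Laplacian $M(G,\tilde g,\theta)\in\mathbb R^{3n\times3n}$ is defined by: for $g=[g_1^\top,\dots,g_n^\top]^\top$, the $k$-th $3$-block of $Mg$ is $\sum_{(i,j,k)\in C}\big(W_{jk}(g_i-g_k)+W_{ki}(g_j-g_k)\big)$ (zero if empty). $\Pi(\tilde g,\theta)=\{g\in\mathbb R^{3n}:g_i=\tau+\Theta\,\mathrm{diag}(s)\Theta^\top\tilde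 g_i\ \forall i,\ s,\tau\in\mathbb R^3\}$. *)

theory Defs
  imports "HOL-Analysis.Analysis"
begin

text \<open>Agents are 1..n; a configuration is a map from agents to real^3
  (x-position, y-position, heading); a vector in R^{3n} is such a map
  restricted to {1..n}.\<close>

definition diag3 :: "real^3 \<Rightarrow> real^3^3" where
  "diag3 s = (\<chi> a b. if a = b then s $ a else 0)"

definition Theta :: "real \<Rightarrow> real^3^3" where
  "Theta \<theta> = vector [vector [cos \<theta>, - sin \<theta>, 0],
                      vector [sin \<theta>,  cos \<theta>, 0],
                      vector [0, 0, 1]]"

definition wmat :: "(nat \<Rightarrow> real^3) \<Rightarrow> real \<Rightarrow> nat \<Rightarrow> nat \<Rightarrow> real^3^3" where
  "wmat gt \<theta> u v = diag3 (transpose (Theta \<theta>) *v gt u - transpose (Theta \<theta>) *v gt v)"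

definition Wmat :: "(nat \<Rightarrow> real^3) \<Rightarrow> real \<Rightarrow> nat \<Rightarrow> nat \<Rightarrow> real^3^3" where
  "Wmat gt \<theta> u v = wmat gt \<theta> u v ** transpose (Theta \<theta>)"

definition triples :: "nat \<Rightarrow> (nat \<times> nat) set \<Rightarrow> (nat \<times> nat \<times> nat) set" where
  "triples n E = {(i, j, k). i \<in> {1..n} \<and> j \<in> {1..n} \<and> k \<in> {1..n} \<and>
                    (i, k) \<in> E \<and> (j, k) \<in> E \<and> i < j}"

text \<open>k-th 3-block of M(G, gt, theta) g.\<close>
definition Mblock :: "nat \<Rightarrow> (nat \<times> nat) set \<Rightarrow> (nat \<Rightarrow> real^3) \<Rightarrow> real
                     \<Rightarrow> (nat \<Rightarrow> real^3) \<Rightarrow> nat \<Rightarrow> real^3" where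
  "Mblock n E gt \<theta> g k =
     (\<Sum>(i, j, k') \<in> {t \<in> triples n E. snd (snd t) = k}.
        Wmat gt \<theta> j k *v (g i - g k) + Wmat gt \<theta> k i *v (g j - g k))"

definition in_null :: "nat \<Rightarrow> (nat \<times> nat) set \<Rightarrow> (nat \<Rightarrow> real^3) \<Rightarrow> real
                     \<Rightarrow> (nat \<Rightarrow> real^3) \<Rightarrow> bool" where
  "in_null n E gt \<theta> g \<longleftrightarrow> (\<forall>k \<in> {1..n}. Mblock n E gt \<theta> g k = 0)"

definition in_Pi :: "nat \<Rightarrow> (nat \<Rightarrow> real^3) \<Rightarrow> real \<Rightarrow> (nat \<Rightarrow> real^3) \<Rightarrow> bool" where
  "in_Pi n gt \<theta> g \<longleftrightarrow> (\<exists>s \<tau> :: real^3. \<forall>i \<in> {1..n}.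
      g i = \<tau> + (Theta \<theta> ** diag3 s ** transpose (Theta \<theta>)) *v gt i)"

end

theory Submission
  imports Defs
begin

text \<open>For \<open>g\<close> in \<open>\<Pi>\<close> the differences are \<open>g i - g k = \<Theta> D\<^sub>s \<Theta>\<^sup>T (gt i - gt k)\<close>. Writing
  \<open>a u = \<Theta>\<^sup>T gt u\<close> and using \<open>\<Theta>\<^sup>T \<Theta> = 1\<close>, the term \<open>W\<^sub>j\<^sub>k (g i - g k)\<close> becomes
  \<open>diag(a j - a k) D\<^sub>s (a i - a k)\<close>, the componentwise product of \<open>s\<close>, \<open>a i - a k\<close> and
  \<open>a j - a k\<close>. Its partner \<open>W\<^sub>k\<^sub>i (g j - g k)\<close> is the same product with one factor negated,
  so every summand of every block of \<open>M g\<close> vanishes.\<close>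

lemma orthogonal_matrix_Theta: "orthogonal_matrix (Theta \<theta>)"
  unfolding orthogonal_matrix_def Theta_def
  by (simp add: vec_eq_iff matrix_matrix_mult_def transpose_def mat_def forall_3 sum_3 vector_def
        sin_cos_squared_add3 add.commute)

lemma diag3_mult_vector: "diag3 d *v v = (\<chi> a. d $ a * v $ a)"
  by (simp add: vec_eq_iff diag3_def matrix_vector_mult_def sum_3 forall_3)

lemma diag3_diag3_mult_swap: "diag3 u *v (diag3 s *v v) = diag3 v *v (diag3 s *v u)"
  by (simp add: diag3_mult_vector vec_eq_iff)

lemma orthogonal_conjugate_diag3_mult:
  assumes "orthogonal_matrix A"
  shows "(diag3 d ** transpose A) *v ((A ** diag3 s ** transpose A) *v v)
       = diag3 d *v (diag3 s *v (transpose A *v v))"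
proof -
  have "(diag3 d ** transpose A) ** (A ** diag3 s ** transpose A)
      = diag3 d ** ((transpose A ** A) ** (diag3 s ** transpose A))"
    by (metis matrix_mul_assoc)
  also have "\<dots> = diag3 d ** diag3 s ** transpose A"
    using assms by (simp add: orthogonal_matrix_def matrix_mul_assoc)
  finally show ?thesis
    by (simp only: matrix_vector_mul_assoc matrix_mul_assoc)
qed

lemma Wmat_triple_cancel:
  fixes gt :: "nat \<Rightarrow> real^3" and s :: "real^3" and \<theta> :: real
  defines "P \<equiv> Theta \<theta> ** diag3 s ** transpose (Theta \<theta>)"
  shows "Wmat gt \<theta> j k *v (P *v (gt i - gt k)) + Wmat gt \<theta> k i *v (P *v (gt j - gt k)) = 0"
proof -
  let ?a = "\<lambda>u. transpose (Theta \<theta>) *v gt u"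
  have W: "Wmat gt \<theta> u v *v (P *v (gt x - gt y))
         = diag3 (?a u - ?a v) *v (diag3 s *v (?a x - ?a y))" for u v x y
    unfolding Wmat_def wmat_def P_def
    by (simp add: orthogonal_conjugate_diag3_mult orthogonal_matrix_Theta
        matrix_vector_mult_diff_distrib)
  have "diag3 (?a k - ?a i) *v (diag3 s *v (?a j - ?a k))
      = - (diag3 (?a j - ?a k) *v (diag3 s *v (?a i - ?a k)))"
    by (subst diag3_diag3_mult_swap) (simp add: diag3_mult_vector vec_eq_iff algebra_simps)
  then show ?thesis
    by (simp add: W)
qed

theorem lemma6:
  fixes n :: nat and E :: "(nat \<times> nat) set"
    and gt g :: "nat \<Rightarrow> real^3" and \<theta> :: real
  assumes "E \<subseteq> {(i, k). i \<in> {1..n} \<and> k \<in> {1..n} \<and> i \<noteq> k}"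
    and "in_Pi n gt \<theta> g"
  shows "in_null n E gt \<theta> g"
proof -
  obtain s \<tau> :: "real^3" where g: "\<forall>i \<in> {1..n}.
      g i = \<tau> + (Theta \<theta> ** diag3 s ** transpose (Theta \<theta>)) *v gt i"
    using assms(2) unfolding in_Pi_def by blast
  have diff: "g i - g k = (Theta \<theta> ** diag3 s ** transpose (Theta \<theta>)) *v (gt i - gt k)"
    if "i \<in> {1..n}" "k \<in> {1..n}" for i k
    using g that by (simp add: matrix_vector_mult_diff_distrib)
  show ?thesis
    unfolding in_null_def Mblock_def
  proof (intro ballI sum.neutral)
    fix k t assume "k \<in> {1..n}" and "t \<in> {t \<in> triples n E. snd (snd t) = k}"
    then obtain i j where "t = (i, j, k)" "i \<in> {1..n}" "j \<in> {1..n}" "k \<in> {1..n}"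
      unfolding triples_def by auto
    then show "(case t of (i, j, k') \<Rightarrow>
        Wmat gt \<theta> j k *v (g i - g k) + Wmat gt \<theta> k i *v (g j - g k)) = 0"
      by (simp add: diff Wmat_triple_cancel)
  qed
qed

end
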